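(* Let $\tau>0$ and let $F\in C^0(\mathbb{R}\times\mathcal{C},\mathbb{R}^m)$ be weakly nonlinear with Lipschitz constant $K>0$, and assume $K\tau e<1$. Define $\widetilde F:\mathbb{R}\times\mathbb{R}^m\to\mathbb{R}^m$ by $\widetilde F(t,z)=F\big(t,[\bar y(t,z)]_t\big)$. Then $\widetilde F$ is continuous and, for every $(t_0,y_0)\in\mathbb{R}\times\mathbb{R}^m$, the initial value problem $z'(t)=\widetilde F(t,z(t))$, $z(t_0)=y_0$, is uniquely solved by the special solution $\bar y(t_0,y_0)$. Moreover, $\widetilde F$ is globally Lipschitz continuous in its second variable with Lipschitz constant $|\lambda_1|<Ke$, where $\lambda_1$ is the unique solution in $(-\frac1\tau,0)$ of $\lambda=-Ke^{-\lambda\tau}$.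
   Context: $\|\cdot\|_\infty$ is the max-norm on $\mathbb{R}^m$; $\mathcal{C}=C^0([-\tau,0],\mathbb{R}^m)$ with the sup-norm $\|u\|_\infty=\sup_{s\in[-\tau,0]}\|u(s)\|_\infty$; for $y$ defined on $[t-\tau,t]$, $y_t\in\mathcal{C}$, $y_t(s)=y(t+s)$. Consider the DDE $\frac{dy}{dt}=F(t,y_t)$. $F:\mathbb{R}\times\mathcal{C}\to\mathbb{R}^m$ is weakly nonlinear if it is continuous, there is $A\ge0$ with $\|F(t,0)\|_\infty\le A$ for all $t\in\mathbb{R}$, and there is $K>0$ with $\|F(t,u)-F(t,v)\|_\infty\le K\|u-v\|_\infty$ for all $t\in\mathbb{R}$, $u,v\in\mathcal{C}$. A special solution is a solution $\bar y:\mathbb{R}\to\mathbb{R}^m$ of the DDE defined (and satisfying the equation) on all of $\mathbb{R}$ with $\sup_{t\in\mathbb{R}}e^{-|t|/\tau}\|\bar y(t)\|<\infty$. It is known (Driver) that under weak nonlinearity and $K\tau e<1$, for every $(t_0,y_0)\in\mathbb{R}\times\mathbb{R}^m$ there is exactly one special solution with $\bar y(t_0)=y_0$; it is denoted $\bar y(t_0,y_0)$. *)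

theory Defs
  imports "HOL-Analysis.Analysis"
begin

definition maxnorm :: "real ^ 'm \<Rightarrow> real" where
  "maxnorm x = Max (range (\<lambda>i. \<bar>x $ i\<bar>))"

text \<open>Elements of C = C^0([-tau,0], R^m) are represented by functions real => real^'m
  that are continuous on [-tau,0]; only their values on [-tau,0] matter.\<close>
definition in_C :: "real \<Rightarrow> (real \<Rightarrow> real ^ 'm) \<Rightarrow> bool" where
  "in_C \<tau> u \<longleftrightarrow> continuous_on {-\<tau>..0} u"

definition supnorm :: "real \<Rightarrow> (real \<Rightarrow> real ^ 'm) \<Rightarrow> real" where
  "supnorm \<tau> u = (SUP s\<in>{-\<tau>..0}. maxnorm (u s))"

definition seg :: "(real \<Rightarrow> real ^ 'm) \<Rightarrow> real \<Rightarrow> (real \<Rightarrow> real ^ 'm)" where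
  "seg y t = (\<lambda>s. y (t + s))"

definition cont_RC :: "real \<Rightarrow> (real \<Rightarrow> (real \<Rightarrow> real ^ 'm) \<Rightarrow> real ^ 'm) \<Rightarrow> bool" where
  "cont_RC \<tau> F \<longleftrightarrow>
     (\<forall>t u. in_C \<tau> u \<longrightarrow> (\<forall>\<epsilon>>0. \<exists>\<delta>>0. \<forall>t' v. in_C \<tau> v \<and> \<bar>t' - t\<bar> < \<delta> \<and>
        supnorm \<tau> (\<lambda>s. v s - u s) < \<delta> \<longrightarrow> maxnorm (F t' v - F t u) < \<epsilon>))"

definition weakly_nonlinear ::
  "real \<Rightarrow> (real \<Rightarrow> (real \<Rightarrow> real ^ 'm) \<Rightarrow> real ^ 'm) \<Rightarrow> real \<Rightarrow> real \<Rightarrow> bool" where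
  "weakly_nonlinear \<tau> F A K \<longleftrightarrow>
     cont_RC \<tau> F \<and> A \<ge> 0 \<and> K > 0 \<and>
     (\<forall>t. maxnorm (F t (\<lambda>s. 0)) \<le> A) \<and>
     (\<forall>t u v. in_C \<tau> u \<and> in_C \<tau> v \<longrightarrow>
        maxnorm (F t u - F t v) \<le> K * supnorm \<tau> (\<lambda>s. u s - v s))"

definition special_solution ::
  "real \<Rightarrow> (real \<Rightarrow> (real \<Rightarrow> real ^ 'm) \<Rightarrow> real ^ 'm) \<Rightarrow> (real \<Rightarrow> real ^ 'm) \<Rightarrow> bool" where
  "special_solution \<tau> F y \<longleftrightarrow>
     (\<forall>t. (y has_vector_derivative F t (seg y t)) (at t)) \<and>
     (\<exists>B. \<forall>t. exp (- \<bar>t\<bar> / \<tau>) * maxnorm (y t) \<le> B)"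

definition ybar ::
  "real \<Rightarrow> (real \<Rightarrow> (real \<Rightarrow> real ^ 'm) \<Rightarrow> real ^ 'm) \<Rightarrow> real \<Rightarrow> real ^ 'm \<Rightarrow> (real \<Rightarrow> real ^ 'm)" where
  "ybar \<tau> F t0 y0 = (THE y. special_solution \<tau> F y \<and> y t0 = y0)"

definition Ftilde ::
  "real \<Rightarrow> (real \<Rightarrow> (real \<Rightarrow> real ^ 'm) \<Rightarrow> real ^ 'm) \<Rightarrow> real \<Rightarrow> real ^ 'm \<Rightarrow> real ^ 'm" where
  "Ftilde \<tau> F t z = F t (seg (ybar \<tau> F t z) t)"

end

theory Submission
  imports Defs
begin

text \<open>
  The difference \<open>d\<close> of two special solutions satisfies the linear delay inequality
  \<open>|d'(t)| \<le> K \<parallel>d\<^sub>t\<parallel>\<close> and grows at most like \<open>e^{|t|/\<tau>}\<close>. Such a \<open>d\<close> obeys the backward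
  estimate \<open>|d(t - h)| \<le> e^{\<mu>h} |d(t)|\<close> for \<open>h \<ge> 0\<close>, where \<open>\<mu> = -\<lambda>\<^sub>1\<close> solves \<open>\<mu> = K e^{\<mu>\<tau>}\<close>:
  if \<open>N\<close> is the least constant with \<open>|d(t - x)| \<le> N (e^{\<mu>x} + \<epsilon> e^{x/\<tau>})\<close> for all \<open>x \<ge> 0\<close>, then
  integrating the delay inequality backwards from \<open>t\<close> reproduces this weight, with a uniform gain
  in the second summand because \<open>K\<tau>e < 1\<close>; hence \<open>N (1 + \<epsilon>) \<le> |d(t)|\<close>, and \<open>\<epsilon> \<rightarrow> 0\<close> gives
  the estimate.

  For \<open>h \<le> \<tau>\<close> this controls whole segments, \<open>\<parallel>ybar(t,z)\<^sub>t - ybar(t,w)\<^sub>t\<parallel> \<le> e^{\<mu>\<tau>} |z - w|\<close>, so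
  \<open>Ftilde\<close> is Lipschitz with constant \<open>K e^{\<mu>\<tau>} = \<mu> = |\<lambda>\<^sub>1|\<close> and, by continuity of \<open>F\<close>,
  jointly continuous. Uniqueness of special solutions gives \<open>ybar(t, ybar(t0,y0)(t)) = ybar(t0,y0)\<close>,
  so \<open>ybar(t0,y0)\<close> solves \<open>z' = Ftilde(t,z)\<close>, and Gronwall's lemma makes it the only solution.
\<close>

lemma maxnorm_ge_component: "\<bar>x $ i\<bar> \<le> maxnorm x"
  unfolding maxnorm_def by (rule Max_ge) auto

lemma maxnorm_le_iff: "maxnorm x \<le> c \<longleftrightarrow> (\<forall>i. \<bar>x $ i\<bar> \<le> c)"
  unfolding maxnorm_def by (subst Max_le_iff) auto

lemma maxnorm_nonneg: "0 \<le> maxnorm x"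
  using maxnorm_ge_component[of x] abs_ge_zero order_trans by blast

lemma maxnorm_minus_commute: "maxnorm (x - y) = maxnorm (y - x)"
  unfolding maxnorm_def by (metis abs_minus_commute vector_minus_component)

lemma maxnorm_triangle_diff: "maxnorm (x - y) \<le> maxnorm x + maxnorm y"
  unfolding maxnorm_le_iff
  by (metis abs_triangle_ineq4 add_mono maxnorm_ge_component order_trans vector_minus_component)

lemma maxnorm_triangle_diff3: "maxnorm (x - z) \<le> maxnorm (x - y) + maxnorm (y - z)"
  using maxnorm_triangle_diff[of "x - y" "z - y"] maxnorm_minus_commute[of z y] by simp

lemma maxnorm_le_norm: "maxnorm x \<le> norm x"
  unfolding maxnorm_le_iff by (simp add: component_le_norm_cart)

lemma norm_le_card_maxnorm: "norm (x :: real ^ 'm) \<le> CARD('m) * maxnorm x"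
proof -
  have "norm x \<le> (\<Sum>i\<in>UNIV. \<bar>x $ i\<bar>)" by (rule norm_le_l1_cart)
  also have "\<dots> \<le> (\<Sum>i\<in>(UNIV :: 'm set). maxnorm x)" by (rule sum_mono) (rule maxnorm_ge_component)
  finally show ?thesis by simp
qed

lemma supnorm_le:
  assumes "0 \<le> \<tau>" "\<And>s. s \<in> {-\<tau>..0} \<Longrightarrow> maxnorm (u s) \<le> c"
  shows "supnorm \<tau> u \<le> c"
  unfolding supnorm_def using assms by (intro cSUP_least) auto

section \<open>The characteristic root\<close>

lemma characteristic_root_ex1:
  fixes \<tau> K :: real
  assumes "0 < \<tau>" "0 < K" "K * \<tau> * exp 1 < 1"
  shows "\<exists>!l. l \<in> {-1/\<tau><..<0} \<and> l = - K * exp (- l * \<tau>)"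
proof -
  define h where "h x = K * exp (x * \<tau>) - x" for x
  have h_decreasing: "h b < h a" if "0 \<le> a" "a < b" "b \<le> 1/\<tau>" for a b
  proof (rule DERIV_neg_imp_decreasing[OF \<open>a < b\<close>])
    fix x assume "a \<le> x" "x \<le> b"
    then have "x * \<tau> \<le> 1"
      using that assms by (simp add: field_simps) (smt (verit) mult_left_mono)
    then have "exp (x * \<tau>) \<le> exp 1" by simp
    then have "K * \<tau> * exp (x * \<tau>) - 1 < 0"
      using assms by (smt (verit) mult_left_mono mult_pos_pos)
    moreover have "(h has_real_derivative K * \<tau> * exp (x * \<tau>) - 1) (at x)"
      unfolding h_def by (auto intro!: derivative_eq_intros)
    ultimately show "\<exists>y. (h has_real_derivative y) (at x) \<and> y < 0" by blast
  qed
  have "continuous_on {0..1/\<tau>} h"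
    unfolding h_def by (intro continuous_intros)
  moreover have "h (1/\<tau>) < 0" "0 < h 0"
    using assms by (simp_all add: h_def field_simps)
  ultimately obtain x where x: "0 \<le> x" "x \<le> 1/\<tau>" "h x = 0"
    using IVT2'[of h "1/\<tau>" 0 0] assms by force
  have root_iff: "l \<in> {-1/\<tau><..<0} \<and> l = - K * exp (- l * \<tau>) \<longleftrightarrow> 0 < -l \<and> -l < 1/\<tau> \<and> h (-l) = 0" for l
    by (auto simp: h_def)
  show ?thesis
  proof (rule ex1I[of _ "-x"])
    show "-x \<in> {-1/\<tau><..<0} \<and> -x = - K * exp (- (-x) * \<tau>)"
      unfolding root_iff using x \<open>0 < h 0\<close> \<open>h (1/\<tau>) < 0\<close> by (auto simp: le_less)
  next
    fix l assume "l \<in> {-1/\<tau><..<0} \<and> l = - K * exp (- l * \<tau>)"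
    then have "0 < -l" "-l < 1/\<tau>" "h (-l) = 0" unfolding root_iff by auto
    then show "l = -x"
      using h_decreasing[of "-l" x] h_decreasing[of x "-l"] x by (cases "-l" x rule: linorder_cases) auto
  qed
qed

lemma characteristic_root_abs_less:
  fixes \<tau> K l :: real
  assumes "0 < \<tau>" "0 < K" "l \<in> {-1/\<tau><..<0}" "l = - K * exp (- l * \<tau>)"
  shows "\<bar>l\<bar> < K * exp 1"
proof -
  have "- l * \<tau> < 1" using assms by (simp add: field_simps)
  then have "K * exp (- l * \<tau>) < K * exp 1" using assms by simp
  moreover have "\<bar>l\<bar> = K * exp (- l * \<tau>)" using assms by simp
  ultimately show ?thesis by simp
qed

section \<open>Comparison and Gronwall lemmas\<close>

lemma deriv_within_nonpos_imp_antimono: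
  fixes g :: "real \<Rightarrow> real"
  assumes "a \<le> b"
    and "\<And>x. x \<in> {a..b} \<Longrightarrow> (g has_real_derivative g' x) (at x within {a..b})"
    and "\<And>x. x \<in> {a..b} \<Longrightarrow> g' x \<le> 0"
  shows "g b \<le> g a"
proof -
  obtain x where "x \<in> {a..b}" "g b - g a = g' x * (b - a)"
    using mvt_very_simple[of a b g "\<lambda>x h. g' x * h"] assms by (auto simp: has_field_derivative_def)
  moreover have "g' x * (b - a) \<le> 0"
    using assms \<open>x \<in> {a..b}\<close> by (intro mult_nonpos_nonneg) auto
  ultimately show ?thesis by linarith
qed

lemma maxnorm_backward_comparison:
  fixes d D :: "real \<Rightarrow> real ^ 'm" and g g' :: "real \<Rightarrow> real"
  assumes d_deriv: "\<And>t. (d has_vector_derivative D t) (at t)"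
    and g_deriv: "\<And>x. (g has_real_derivative g' x) (at x)"
    and D_le: "\<And>x. 0 \<le> x \<Longrightarrow> maxnorm (D (t0 - x)) \<le> g' x"
    and start: "maxnorm (d t0) \<le> g 0"
    and "0 \<le> x"
  shows "maxnorm (d (t0 - x)) \<le> g x"
  unfolding maxnorm_le_iff
proof
  fix i
  have component_deriv: "((\<lambda>x. d (t0 - x) $ i) has_real_derivative - D (t0 - x) $ i) (at x)" for x
  proof -
    have "((\<lambda>t. d t $ i) has_real_derivative D (t0 - x) $ i) (at (t0 - x))"
      using bounded_linear.has_vector_derivative[OF bounded_linear_vec_nth d_deriv]
      by (simp add: has_real_derivative_iff_has_vector_derivative)
    then have "((\<lambda>x. d (t0 - x) $ i) has_real_derivative D (t0 - x) $ i * -1) (at x)"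
      by (rule DERIV_chain2[where g = "\<lambda>x. t0 - x"]) (auto intro!: derivative_eq_intros)
    then show ?thesis by simp
  qed
  have decrease: "\<sigma> * d (t0 - x) $ i - g x \<le> \<sigma> * d (t0 - 0) $ i - g 0" if "\<bar>\<sigma>\<bar> = 1" for \<sigma>
  proof (rule deriv_nonpos_imp_antimono[where g = "\<lambda>x. \<sigma> * d (t0 - x) $ i - g x"
        and g' = "\<lambda>r. \<sigma> * - D (t0 - r) $ i - g' r"])
    fix r assume "r \<in> {0..x}"
    have "\<sigma> * - D (t0 - r) $ i \<le> \<bar>D (t0 - r) $ i\<bar>"
      using abs_ge_self[of "\<sigma> * - D (t0 - r) $ i"] that by (simp add: abs_mult)
    also have "\<dots> \<le> g' r"
      using maxnorm_ge_component[of "D (t0 - r)" i] D_le[of r] \<open>r \<in> {0..x}\<close> by auto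
    finally show "\<sigma> * - D (t0 - r) $ i - g' r \<le> 0" by simp
  qed (intro DERIV_diff DERIV_cmult component_deriv g_deriv | fact)+
  have initial: "\<sigma> * d (t0 - 0) $ i \<le> g 0" if "\<bar>\<sigma>\<bar> = 1" for \<sigma>
    using abs_ge_self[of "\<sigma> * d t0 $ i"] that start maxnorm_ge_component[of "d t0" i]
    by (simp add: abs_mult)
  have "\<sigma> * d (t0 - x) $ i \<le> g x" if "\<bar>\<sigma>\<bar> = 1" for \<sigma>
    using decrease[OF that] initial[OF that] by simp
  from this[of 1] this[of "-1"] show "\<bar>d (t0 - x) $ i\<bar> \<le> g x" by simp
qed

lemma gronwall_zero:
  fixes v v' :: "real \<Rightarrow> real"
  assumes I: "is_interval I" "t0 \<in> I" "t \<in> I"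
    and v0: "v t0 = 0" and v_nonneg: "\<And>s. s \<in> I \<Longrightarrow> 0 \<le> v s"
    and v_deriv: "\<And>s. s \<in> I \<Longrightarrow> (v has_real_derivative v' s) (at s within I)"
    and v'_le: "\<And>s. s \<in> I \<Longrightarrow> \<bar>v' s\<bar> \<le> M * v s"
  shows "v t = 0"
proof -
  have segment: "{a..b} \<subseteq> I" if "a \<in> I" "b \<in> I" for a b
    using I(1) that unfolding is_interval_1 by (meson atLeastAtMost_iff subsetI)
  have deriv_segment: "(v has_real_derivative v' s) (at s within {a..b})"
    if "a \<in> I" "b \<in> I" "s \<in> {a..b}" for a b s
    using DERIV_subset[OF v_deriv segment[OF that(1,2)]] segment[OF that(1,2)] that(3) by blast
  have "v t \<le> 0"
  proof (cases "t0 \<le> t")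
    case True
    have "exp (- M * t) * v t \<le> exp (- M * t0) * v t0"
    proof (rule deriv_within_nonpos_imp_antimono[OF True])
      fix s assume s: "s \<in> {t0..t}"
      show "((\<lambda>s. exp (- M * s) * v s) has_real_derivative
          exp (- M * s) * - M * v s + v' s * exp (- M * s)) (at s within {t0..t})"
        by (rule DERIV_mult[OF _ deriv_segment[OF I(2,3) s]]) (auto intro!: derivative_eq_intros)
      have "v' s - M * v s \<le> 0"
        using v'_le[of s] s segment[OF I(2,3)] by auto
      then show "exp (- M * s) * - M * v s + v' s * exp (- M * s) \<le> 0"
        using mult_left_mono[of "v' s - M * v s" 0 "exp (- M * s)"] by (simp add: algebra_simps)
    qed
    then show ?thesis using v0 by (simp add: mult_le_0_iff)
  next
    case False
    have "- exp (M * t0) * v t0 \<le> - exp (M * t) * v t"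
    proof (rule deriv_within_nonpos_imp_antimono[where g = "\<lambda>s. - exp (M * s) * v s"])
      show "t \<le> t0" using False by simp
      fix s assume s: "s \<in> {t..t0}"
      show "((\<lambda>s. - exp (M * s) * v s) has_real_derivative
          - exp (M * s) * M * v s + v' s * - exp (M * s)) (at s within {t..t0})"
        by (rule DERIV_mult[OF _ deriv_segment[OF I(3,2) s]]) (auto intro!: derivative_eq_intros)
      have "0 \<le> v' s + M * v s"
        using v'_le[of s] s segment[OF I(3,2)] by auto
      then show "- exp (M * s) * M * v s + v' s * - exp (M * s) \<le> 0"
        using mult_left_mono[of 0 "v' s + M * v s" "exp (M * s)"] by (simp add: algebra_simps)
    qed
    then show ?thesis using v0 by (simp add: mult_le_0_iff)
  qed
  then show ?thesis using v_nonneg[OF I(3)] by simp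
qed

lemma gronwall_zero_maxnorm:
  fixes d d' :: "real \<Rightarrow> real ^ 'm"
  assumes I: "is_interval I" "t0 \<in> I" "t \<in> I"
    and d0: "d t0 = 0"
    and d_deriv: "\<And>s. s \<in> I \<Longrightarrow> (d has_vector_derivative d' s) (at s within I)"
    and d'_le: "\<And>s. s \<in> I \<Longrightarrow> maxnorm (d' s) \<le> L * maxnorm (d s)"
    and "0 \<le> L"
  shows "d t = 0"
proof -
  define M where "M = 2 * CARD('m) * L"
  \<comment> \<open>work with the squared Euclidean norm, which is differentiable\<close>
  have "d t \<bullet> d t = 0"
  proof (rule gronwall_zero[OF I, where v' = "\<lambda>s. 2 * (d s \<bullet> d' s)"])
    fix s assume s: "s \<in> I"
    show "((\<lambda>s. d s \<bullet> d s) has_real_derivative 2 * (d s \<bullet> d' s)) (at s within I)"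
      using bounded_bilinear.has_vector_derivative[OF bounded_bilinear_inner d_deriv[OF s] d_deriv[OF s]]
      by (simp add: has_real_derivative_iff_has_vector_derivative inner_commute)
    have "norm (d' s) \<le> CARD('m) * maxnorm (d' s)"
      by (rule norm_le_card_maxnorm)
    also have "\<dots> \<le> CARD('m) * (L * norm (d s))"
      using d'_le[OF s] maxnorm_le_norm[of "d s"] \<open>0 \<le> L\<close>
      by (intro mult_left_mono) (auto intro: order_trans mult_left_mono)
    finally have "\<bar>d s \<bullet> d' s\<bar> \<le> norm (d s) * (CARD('m) * (L * norm (d s)))"
      by (meson Cauchy_Schwarz_ineq2 mult_left_mono norm_ge_zero order_trans)
    then show "\<bar>2 * (d s \<bullet> d' s)\<bar> \<le> M * (d s \<bullet> d s)"
      by (simp add: M_def power2_norm_eq_inner[symmetric] power2_eq_square algebra_simps)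
  qed (use d0 in simp_all)
  then show ?thesis by simp
qed

section \<open>Backward estimate for linear delay inequalities\<close>

locale delay_differential_inequality =
  fixes \<tau> K \<mu> :: real and d D :: "real \<Rightarrow> real ^ 'm"
  assumes tau_pos: "0 < \<tau>" and K_pos: "0 < K" and small_delay: "K * \<tau> * exp 1 < 1"
    and rate_pos: "0 < \<mu>" and rate_less: "\<mu> < 1 / \<tau>" and rate_eq: "\<mu> = K * exp (\<mu> * \<tau>)"
    and has_derivative: "\<And>t. (d has_vector_derivative D t) (at t)"
    and derivative_bound: "\<And>t. maxnorm (D t) \<le> K * supnorm \<tau> (seg d t)"
    and exponential_growth: "\<exists>B. \<forall>t. maxnorm (d t) \<le> B * exp (\<bar>t\<bar> / \<tau>)"
begin

text \<open>For \<open>\<epsilon> > 0\<close> the second summand dominates the admissible growth of \<open>d\<close>, so that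
  \<open>|d(t0 - x)| / weight \<epsilon> x\<close> has a finite supremum over \<open>x \<ge> 0\<close>.\<close>
definition weight :: "real \<Rightarrow> real \<Rightarrow> real" where
  "weight \<epsilon> x = exp (\<mu> * x) + \<epsilon> * exp (x / \<tau>)"

lemma weight_pos: "0 \<le> \<epsilon> \<Longrightarrow> 0 < weight \<epsilon> x"
  unfolding weight_def by (simp add: add_pos_nonneg)

lemma weight_mono: "0 \<le> \<epsilon> \<Longrightarrow> x \<le> y \<Longrightarrow> weight \<epsilon> x \<le> weight \<epsilon> y"
  unfolding weight_def using rate_pos tau_pos
  by (intro add_mono mult_left_mono) (auto simp: divide_right_mono)

lemma comparison_bound:
  assumes "0 \<le> N" "0 \<le> \<epsilon>"
    and bound: "\<And>r. 0 \<le> r \<Longrightarrow> maxnorm (d (t0 - r)) \<le> N * weight \<epsilon> r"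
    and "0 \<le> x"
  shows "maxnorm (d (t0 - x)) \<le>
    maxnorm (d t0) + N * (weight \<epsilon> x - (1 + \<epsilon>)) - N * \<epsilon> * (1 - K * \<tau> * exp 1) * (exp (x / \<tau>) - 1)"
proof -
  define g where "g x = maxnorm (d t0) + N * (weight \<epsilon> x - (1 + \<epsilon>))
    - N * \<epsilon> * (1 - K * \<tau> * exp 1) * (exp (x / \<tau>) - 1)" for x
  have "maxnorm (d (t0 - x)) \<le> g x"
  proof (rule maxnorm_backward_comparison[OF has_derivative _ _ _ \<open>0 \<le> x\<close>])
    fix r
    have "(g has_real_derivative N * (\<mu> * exp (\<mu> * r)) + N * \<epsilon> * K * exp 1 * exp (r / \<tau>)) (at r)"
      unfolding g_def weight_def using tau_pos by (auto intro!: derivative_eq_intros simp: field_simps)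
    moreover have "K * exp (\<mu> * (r + \<tau>)) = \<mu> * exp (\<mu> * r)"
      by (subst (2) rate_eq) (simp add: distrib_left exp_add mult.commute)
    moreover have "exp ((r + \<tau>) / \<tau>) = exp (r / \<tau>) * exp 1"
      using tau_pos by (simp add: add_divide_distrib exp_add)
    moreover have "K * N * weight \<epsilon> (r + \<tau>) =
        N * (K * exp (\<mu> * (r + \<tau>))) + N * \<epsilon> * K * exp ((r + \<tau>) / \<tau>)"
      by (simp add: weight_def algebra_simps)
    ultimately show "(g has_real_derivative K * N * weight \<epsilon> (r + \<tau>)) (at r)"
      by (simp add: algebra_simps)
  next
    fix r :: real assume "0 \<le> r"
    have "supnorm \<tau> (seg d (t0 - r)) \<le> N * weight \<epsilon> (r + \<tau>)"
    proof (rule supnorm_le)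
      fix s :: real assume s: "s \<in> {-\<tau>..0}"
      have "maxnorm (seg d (t0 - r) s) = maxnorm (d (t0 - (r - s)))"
        by (simp add: seg_def algebra_simps)
      also have "\<dots> \<le> N * weight \<epsilon> (r - s)"
        using bound s \<open>0 \<le> r\<close> by simp
      also have "\<dots> \<le> N * weight \<epsilon> (r + \<tau>)"
        using s \<open>0 \<le> N\<close> \<open>0 \<le> \<epsilon>\<close> by (intro mult_left_mono weight_mono) auto
      finally show "maxnorm (seg d (t0 - r) s) \<le> N * weight \<epsilon> (r + \<tau>)" .
    qed (use tau_pos in simp)
    then show "maxnorm (D (t0 - r)) \<le> K * N * weight \<epsilon> (r + \<tau>)"
      using derivative_bound[of "t0 - r"] K_pos by (smt (verit) mult.assoc mult_left_mono)
  next
    show "maxnorm (d t0) \<le> g 0" by (simp add: g_def weight_def)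
  qed
  then show ?thesis by (simp add: g_def)
qed

lemma weighted_bound_improves:
  assumes "0 < \<epsilon>" "maxnorm (d t0) < N * (1 + \<epsilon>)"
    and bound: "\<And>r. 0 \<le> r \<Longrightarrow> maxnorm (d (t0 - r)) \<le> N * weight \<epsilon> r"
  obtains a where "0 < a" "\<And>r. 0 \<le> r \<Longrightarrow> maxnorm (d (t0 - r)) \<le> (N - a) * weight \<epsilon> r"
proof
  define q where "q = K * \<tau> * exp 1"
  \<comment> \<open>both deficits of the comparison function in \<open>comparison_bound\<close> are at least \<open>a e^{r/\<tau>}\<close>\<close>
  define a where "a = min (N * (1 + \<epsilon>) - maxnorm (d t0)) (N * \<epsilon> * (1 - q))"
  have "0 < N"
    using assms(1,2) maxnorm_nonneg[of "d t0"] by (smt (verit) mult_nonpos_nonneg)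
  then have "0 < a"
    using assms small_delay by (simp add: a_def q_def)
  then show "0 < a / (1 + \<epsilon>)"
    using \<open>0 < \<epsilon>\<close> by simp
  fix r :: real assume "0 \<le> r"
  define E where "E = exp (r / \<tau>)"
  have "1 \<le> E" using \<open>0 \<le> r\<close> tau_pos by (simp add: E_def)
  have "\<mu> * r \<le> r / \<tau>"
    using mult_right_mono[OF less_imp_le[OF rate_less] \<open>0 \<le> r\<close>] by simp
  then have "exp (\<mu> * r) \<le> E" by (simp add: E_def)
  then have "weight \<epsilon> r \<le> (1 + \<epsilon>) * E" by (simp add: weight_def E_def algebra_simps)
  then have "a * weight \<epsilon> r \<le> a * ((1 + \<epsilon>) * E)"
    using \<open>0 < a\<close> by (intro mult_left_mono) auto
  then have "a * weight \<epsilon> r / (1 + \<epsilon>) \<le> a * E"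
    using \<open>0 < \<epsilon>\<close> by (simp add: divide_le_eq algebra_simps)
  also have "\<dots> \<le> (N * (1 + \<epsilon>) - maxnorm (d t0)) + N * \<epsilon> * (1 - q) * (E - 1)"
  proof -
    have "a \<le> N * (1 + \<epsilon>) - maxnorm (d t0)" "a * (E - 1) \<le> N * \<epsilon> * (1 - q) * (E - 1)"
      using \<open>1 \<le> E\<close> by (auto simp: a_def intro!: mult_right_mono)
    then show ?thesis by (simp add: algebra_simps)
  qed
  finally have "maxnorm (d (t0 - r)) \<le> N * weight \<epsilon> r - a * weight \<epsilon> r / (1 + \<epsilon>)"
    using comparison_bound[OF less_imp_le[OF \<open>0 < N\<close>] less_imp_le[OF \<open>0 < \<epsilon>\<close>] bound \<open>0 \<le> r\<close>]
    unfolding E_def q_def right_diff_distrib by linarith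
  then show "maxnorm (d (t0 - r)) \<le> (N - a / (1 + \<epsilon>)) * weight \<epsilon> r"
    by (simp add: algebra_simps)
qed

lemma weighted_bound_exists:
  assumes "0 < \<epsilon>"
  obtains M where "\<And>r. 0 \<le> r \<Longrightarrow> maxnorm (d (t0 - r)) \<le> M * weight \<epsilon> r"
proof -
  obtain B where B: "\<And>t. maxnorm (d t) \<le> B * exp (\<bar>t\<bar> / \<tau>)"
    using exponential_growth by blast
  have "0 \<le> B" using B[of 0] maxnorm_nonneg[of "d 0"] by simp
  have "maxnorm (d (t0 - r)) \<le> B * exp (\<bar>t0\<bar> / \<tau>) / \<epsilon> * weight \<epsilon> r" if "0 \<le> r" for r
  proof -
    have "maxnorm (d (t0 - r)) \<le> B * exp ((\<bar>t0\<bar> + r) / \<tau>)"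
      using B[of "t0 - r"] \<open>0 \<le> B\<close> tau_pos \<open>0 \<le> r\<close>
      by (smt (verit) divide_right_mono exp_le_cancel_iff mult_left_mono)
    also have "\<dots> = B * exp (\<bar>t0\<bar> / \<tau>) / \<epsilon> * (\<epsilon> * exp (r / \<tau>))"
      using assms by (simp add: add_divide_distrib exp_add)
    also have "\<dots> \<le> B * exp (\<bar>t0\<bar> / \<tau>) / \<epsilon> * weight \<epsilon> r"
      using \<open>0 \<le> B\<close> assms by (intro mult_left_mono) (auto simp: weight_def)
    finally show ?thesis .
  qed
  then show ?thesis using that by blast
qed

lemma weighted_bound:
  assumes "0 < \<epsilon>" "0 \<le> x"
  shows "maxnorm (d (t0 - x)) * (1 + \<epsilon>) \<le> maxnorm (d t0) * weight \<epsilon> x"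
proof -
  define ratio where "ratio r = maxnorm (d (t0 - r)) / weight \<epsilon> r" for r
  obtain M where "\<And>r. 0 \<le> r \<Longrightarrow> maxnorm (d (t0 - r)) \<le> M * weight \<epsilon> r"
    using weighted_bound_exists[OF \<open>0 < \<epsilon>\<close>] by blast
  then have bdd: "bdd_above (ratio ` {0..})"
    using weight_pos[of \<epsilon>] assms by (intro bdd_aboveI2) (simp add: ratio_def divide_le_eq)
  define N where "N = (SUP r\<in>{0..}. ratio r)"
  have N_bound: "maxnorm (d (t0 - r)) \<le> N * weight \<epsilon> r" if "0 \<le> r" for r
    using cSUP_upper[OF _ bdd, of r] that weight_pos[of \<epsilon> r] assms
    by (simp add: N_def ratio_def divide_le_eq)
  have "N * (1 + \<epsilon>) \<le> maxnorm (d t0)"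
  proof (rule ccontr)
    assume "\<not> ?thesis"
    then obtain a where "0 < a" and improved: "\<And>r. 0 \<le> r \<Longrightarrow> ratio r \<le> N - a"
      using weighted_bound_improves[OF \<open>0 < \<epsilon>\<close> _ N_bound] weight_pos[of \<epsilon>] assms
      by (metis less_eq_real_def not_le pos_divide_le_eq ratio_def)
    have "N \<le> N - a"
      unfolding N_def by (rule cSUP_least) (use improved in \<open>auto simp: N_def\<close>)
    then show False using \<open>0 < a\<close> by simp
  qed
  then have "N * weight \<epsilon> x * (1 + \<epsilon>) \<le> maxnorm (d t0) * weight \<epsilon> x"
    using weight_pos[of \<epsilon> x] assms by (simp add: mult.commute mult_left_mono)
  moreover have "maxnorm (d (t0 - x)) * (1 + \<epsilon>) \<le> N * weight \<epsilon> x * (1 + \<epsilon>)"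
    using N_bound[OF \<open>0 \<le> x\<close>] assms by simp
  ultimately show ?thesis by linarith
qed

lemma backward_bound:
  assumes "0 \<le> h"
  shows "maxnorm (d (t0 - h)) \<le> exp (\<mu> * h) * maxnorm (d t0)"
proof -
  have "((\<lambda>\<epsilon>. maxnorm (d t0) * weight \<epsilon> h) \<longlongrightarrow> maxnorm (d t0) * weight 0 h) (at_right 0)"
    unfolding weight_def by (intro tendsto_intros)
  moreover have "((\<lambda>\<epsilon>. maxnorm (d (t0 - h)) * (1 + \<epsilon>)) \<longlongrightarrow> maxnorm (d (t0 - h)) * (1 + 0)) (at_right 0)"
    by (intro tendsto_intros)
  moreover have "\<forall>\<^sub>F \<epsilon> in at_right 0. maxnorm (d (t0 - h)) * (1 + \<epsilon>) \<le> maxnorm (d t0) * weight \<epsilon> h"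
    using eventually_at_right_less[of 0] by eventually_elim (use weighted_bound[OF _ assms] in auto)
  ultimately have "maxnorm (d (t0 - h)) * (1 + 0) \<le> maxnorm (d t0) * weight 0 h"
    by (rule tendsto_le[OF trivial_limit_at_right_real])
  then show ?thesis by (simp add: weight_def mult.commute)
qed

end

section \<open>Special solutions and the reduced equation\<close>

lemma special_solution_continuous: "special_solution \<tau> F y \<Longrightarrow> continuous_on UNIV y"
  unfolding special_solution_def
  by (meson continuous_at_imp_continuous_on has_vector_derivative_continuous)

lemma special_solution_seg_in_C: "special_solution \<tau> F y \<Longrightarrow> in_C \<tau> (seg y t)"
  unfolding in_C_def seg_def
  by (intro continuous_on_compose2[OF special_solution_continuous] continuous_intros) auto

lemma special_solution_growth:
  assumes "special_solution \<tau> F y"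
  shows "\<exists>B. \<forall>t. maxnorm (y t) \<le> B * exp (\<bar>t\<bar> / \<tau>)"
proof -
  obtain B where B: "\<And>t. exp (- \<bar>t\<bar> / \<tau>) * maxnorm (y t) \<le> B"
    using assms unfolding special_solution_def by blast
  have "maxnorm (y t) \<le> B * exp (\<bar>t\<bar> / \<tau>)" for t
    using mult_right_mono[OF B[of t], of "exp (\<bar>t\<bar> / \<tau>)"] by (simp add: exp_minus field_simps)
  then show ?thesis by blast
qed

locale weakly_nonlinear_dde =
  fixes \<tau> A K :: real and F :: "real \<Rightarrow> (real \<Rightarrow> real ^ 'm) \<Rightarrow> real ^ 'm"
  assumes tau_pos: "0 < \<tau>" and weakly_nonlinear: "weakly_nonlinear \<tau> F A K"
    and small_delay: "K * \<tau> * exp 1 < 1"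
    and driver: "\<And>t0 y0. \<exists>!y. special_solution \<tau> F y \<and> y t0 = y0"
begin

lemma K_pos: "0 < K"
  using weakly_nonlinear by (simp add: weakly_nonlinear_def)

lemma F_lipschitz: "in_C \<tau> u \<Longrightarrow> in_C \<tau> v \<Longrightarrow> maxnorm (F t u - F t v) \<le> K * supnorm \<tau> (\<lambda>s. u s - v s)"
  using weakly_nonlinear by (simp add: weakly_nonlinear_def)

lemma F_continuous: "cont_RC \<tau> F"
  using weakly_nonlinear by (simp add: weakly_nonlinear_def)

definition char_root :: real where
  "char_root = (THE l. l \<in> {-1/\<tau><..<0} \<and> l = - K * exp (- l * \<tau>))"

lemma char_root_iff: "l \<in> {-1/\<tau><..<0} \<and> l = - K * exp (- l * \<tau>) \<longleftrightarrow> l = char_root"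
  using theI'[OF characteristic_root_ex1[OF tau_pos K_pos small_delay]]
    characteristic_root_ex1[OF tau_pos K_pos small_delay]
  unfolding char_root_def by blast

lemma abs_char_root: "0 < \<bar>char_root\<bar>" "\<bar>char_root\<bar> < 1 / \<tau>" "\<bar>char_root\<bar> = K * exp (\<bar>char_root\<bar> * \<tau>)"
  using char_root_iff[of char_root] by auto

lemma ybar_special_solution: "special_solution \<tau> F (ybar \<tau> F t0 y0)"
  and ybar_initial: "ybar \<tau> F t0 y0 t0 = y0"
  using theI'[OF driver[of t0 y0]] unfolding ybar_def by auto

lemma ybar_eq_special_solution: "special_solution \<tau> F y \<Longrightarrow> ybar \<tau> F t0 (y t0) = y"
  unfolding ybar_def using driver by (intro the1_equality) auto

lemma special_solutions_backward_bound:
  assumes y1: "special_solution \<tau> F y1" and y2: "special_solution \<tau> F y2" and "0 \<le> h"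
  shows "maxnorm (y1 (t - h) - y2 (t - h)) \<le> exp (\<bar>char_root\<bar> * h) * maxnorm (y1 t - y2 t)"
proof -
  interpret delay_differential_inequality \<tau> K "\<bar>char_root\<bar>" "\<lambda>t. y1 t - y2 t"
    "\<lambda>t. F t (seg y1 t) - F t (seg y2 t)"
  proof
    fix t
    show "((\<lambda>t. y1 t - y2 t) has_vector_derivative F t (seg y1 t) - F t (seg y2 t)) (at t)"
      using y1 y2 unfolding special_solution_def by (auto intro!: has_vector_derivative_diff)
    show "maxnorm (F t (seg y1 t) - F t (seg y2 t)) \<le> K * supnorm \<tau> (seg (\<lambda>t. y1 t - y2 t) t)"
      using F_lipschitz[OF special_solution_seg_in_C[OF y1] special_solution_seg_in_C[OF y2]]
      by (simp add: seg_def)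
  next
    obtain B1 B2 where "\<And>t. maxnorm (y1 t) \<le> B1 * exp (\<bar>t\<bar> / \<tau>)" "\<And>t. maxnorm (y2 t) \<le> B2 * exp (\<bar>t\<bar> / \<tau>)"
      using special_solution_growth[OF y1] special_solution_growth[OF y2] by blast
    then have "maxnorm (y1 t - y2 t) \<le> (B1 + B2) * exp (\<bar>t\<bar> / \<tau>)" for t
      using maxnorm_triangle_diff[of "y1 t" "y2 t"] by (smt (verit) distrib_right)
    then show "\<exists>B. \<forall>t. maxnorm (y1 t - y2 t) \<le> B * exp (\<bar>t\<bar> / \<tau>)" by blast
  qed (use tau_pos K_pos small_delay abs_char_root in auto)
  show ?thesis by (rule backward_bound[OF \<open>0 \<le> h\<close>])
qed

lemma special_solutions_seg_bound:
  assumes "special_solution \<tau> F y1" "special_solution \<tau> F y2" "s \<in> {-\<tau>..0}"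
  shows "maxnorm (y1 (t + s) - y2 (t + s)) \<le> exp (\<bar>char_root\<bar> * \<tau>) * maxnorm (y1 t - y2 t)"
proof -
  have "maxnorm (y1 (t - (-s)) - y2 (t - (-s))) \<le> exp (\<bar>char_root\<bar> * (-s)) * maxnorm (y1 t - y2 t)"
    using assms by (intro special_solutions_backward_bound) auto
  also have "\<dots> \<le> exp (\<bar>char_root\<bar> * \<tau>) * maxnorm (y1 t - y2 t)"
  proof -
    have "\<bar>char_root\<bar> * (-s) \<le> \<bar>char_root\<bar> * \<tau>"
      using assms(3) by (intro mult_left_mono) auto
    then show ?thesis by (intro mult_right_mono maxnorm_nonneg) simp
  qed
  finally show ?thesis by simp
qed

lemma Ftilde_lipschitz: "maxnorm (Ftilde \<tau> F t z - Ftilde \<tau> F t w) \<le> \<bar>char_root\<bar> * maxnorm (z - w)"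
proof -
  define y1 y2 where "y1 = ybar \<tau> F t z" and "y2 = ybar \<tau> F t w"
  note sol = ybar_special_solution[of t z] ybar_special_solution[of t w]
  have "supnorm \<tau> (\<lambda>s. seg y1 t s - seg y2 t s) \<le> exp (\<bar>char_root\<bar> * \<tau>) * maxnorm (z - w)"
  proof (rule supnorm_le)
    fix s assume "s \<in> {-\<tau>..0}"
    from special_solutions_seg_bound[OF sol this, of t]
    show "maxnorm (seg y1 t s - seg y2 t s) \<le> exp (\<bar>char_root\<bar> * \<tau>) * maxnorm (z - w)"
      by (simp add: seg_def y1_def y2_def ybar_initial)
  qed (use tau_pos in simp)
  then have "K * supnorm \<tau> (\<lambda>s. seg y1 t s - seg y2 t s) \<le> \<bar>char_root\<bar> * maxnorm (z - w)"
    using K_pos abs_char_root(3) by (smt (verit) mult.assoc mult_left_mono)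
  then show ?thesis
    using F_lipschitz[OF special_solution_seg_in_C special_solution_seg_in_C, OF sol]
    unfolding Ftilde_def y1_def y2_def by (meson order_trans)
qed

lemma ybar_seg_deviation:
  assumes "s \<in> {-\<tau>..0}"
  shows "maxnorm (ybar \<tau> F t' z' (t' + s) - ybar \<tau> F t z (t + s)) \<le>
    exp (\<bar>char_root\<bar> * \<tau>) * (maxnorm (z' - z) + maxnorm (z - ybar \<tau> F t z t'))
    + maxnorm (ybar \<tau> F t z (t' + s) - ybar \<tau> F t z (t + s))"
proof -
  define Y Y' where "Y = ybar \<tau> F t z" and "Y' = ybar \<tau> F t' z'"
  have "maxnorm (Y' (t' + s) - Y (t' + s)) \<le> exp (\<bar>char_root\<bar> * \<tau>) * maxnorm (Y' t' - Y t')"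
    using special_solutions_seg_bound[OF ybar_special_solution ybar_special_solution assms]
    by (simp add: Y_def Y'_def)
  also have "\<dots> \<le> exp (\<bar>char_root\<bar> * \<tau>) * (maxnorm (z' - z) + maxnorm (z - Y t'))"
    using maxnorm_triangle_diff3[of z' "Y t'" z] by (simp add: Y'_def ybar_initial)
  finally show ?thesis
    using maxnorm_triangle_diff3[of "Y' (t' + s)" "Y (t + s)" "Y (t' + s)"]
    unfolding Y_def Y'_def by linarith
qed

lemma seg_ybar_continuous:
  assumes "0 < \<eta>"
  obtains \<delta> where "0 < \<delta>"
    "\<And>t' z'. \<bar>t' - t\<bar> < \<delta> \<Longrightarrow> maxnorm (z' - z) < \<delta> \<Longrightarrow>
       supnorm \<tau> (\<lambda>s. seg (ybar \<tau> F t' z') t' s - seg (ybar \<tau> F t z) t s) < \<eta>"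
proof -
  define Y where "Y = ybar \<tau> F t z"
  define E where "E = exp (\<bar>char_root\<bar> * \<tau>)"
  define \<theta> where "\<theta> = \<eta> / (4 * E)"
  have "1 \<le> E" using tau_pos by (simp add: E_def)
  then have "0 < \<theta>" "3 * E * \<theta> < \<eta>" using assms by (auto simp: \<theta>_def field_simps)
  have "continuous_on {t - \<tau> - 1 .. t + 1} Y"
    using continuous_on_subset[OF special_solution_continuous[OF ybar_special_solution[of t z]]]
    unfolding Y_def by blast
  then have "uniformly_continuous_on {t - \<tau> - 1 .. t + 1} Y"
    by (rule compact_uniformly_continuous) simp
  then obtain \<delta>' where "0 < \<delta>'" and Y_close:
    "\<And>a b. a \<in> {t - \<tau> - 1 .. t + 1} \<Longrightarrow> b \<in> {t - \<tau> - 1 .. t + 1} \<Longrightarrow> dist b a < \<delta>' \<Longrightarrow>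
      dist (Y b) (Y a) < \<theta>"
    using \<open>0 < \<theta>\<close> unfolding uniformly_continuous_on_def by metis
  show ?thesis
  proof
    show "0 < min (min 1 \<delta>') \<theta>" using \<open>0 < \<delta>'\<close> \<open>0 < \<theta>\<close> by simp
    fix t' z' assume t': "\<bar>t' - t\<bar> < min (min 1 \<delta>') \<theta>" and z': "maxnorm (z' - z) < min (min 1 \<delta>') \<theta>"
    have Y_shift: "maxnorm (Y (t' + s) - Y (t + s)) < \<theta>" if "s \<in> {-\<tau>..0}" for s
    proof -
      have "t + s \<in> {t - \<tau> - 1 .. t + 1}" "t' + s \<in> {t - \<tau> - 1 .. t + 1}" "dist (t' + s) (t + s) < \<delta>'"
        using that t' by (auto simp: dist_real_def)
      from Y_close[OF this] show ?thesis
        using maxnorm_le_norm[of "Y (t' + s) - Y (t + s)"] by (simp add: dist_norm)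
    qed
    have "maxnorm (z - Y t') < \<theta>"
      using Y_shift[of 0] tau_pos maxnorm_minus_commute[of z] by (simp add: Y_def ybar_initial)
    have "supnorm \<tau> (\<lambda>s. seg (ybar \<tau> F t' z') t' s - seg Y t s) \<le> E * (2 * \<theta>) + \<theta>"
    proof (rule supnorm_le)
      fix s assume s: "s \<in> {-\<tau>..0}"
      have "E * (maxnorm (z' - z) + maxnorm (z - Y t')) \<le> E * (2 * \<theta>)"
        using z' \<open>maxnorm (z - Y t') < \<theta>\<close> \<open>1 \<le> E\<close> by (intro mult_left_mono) auto
      then show "maxnorm (seg (ybar \<tau> F t' z') t' s - seg Y t s) \<le> E * (2 * \<theta>) + \<theta>"
        using ybar_seg_deviation[OF s, of t' z' t z] Y_shift[OF s]
        unfolding seg_def Y_def E_def by linarith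
    qed (use tau_pos in simp)
    also have "\<dots> < \<eta>"
      using \<open>3 * E * \<theta> < \<eta>\<close> mult_right_mono[OF \<open>1 \<le> E\<close>, of \<theta>] \<open>0 < \<theta>\<close> by linarith
    finally show "supnorm \<tau> (\<lambda>s. seg (ybar \<tau> F t' z') t' s - seg (ybar \<tau> F t z) t s) < \<eta>"
      by (simp add: Y_def)
  qed
qed

lemma Ftilde_continuous: "continuous_on UNIV (\<lambda>(t, z). Ftilde \<tau> F t z)"
  unfolding continuous_on_iff
proof (intro ballI allI impI)
  fix p :: "real \<times> (real ^ 'm)" and e :: real
  assume "0 < e"
  obtain t z where p: "p = (t, z)" by fastforce
  define u where "u = seg (ybar \<tau> F t z) t"
  have "in_C \<tau> u" unfolding u_def by (rule special_solution_seg_in_C[OF ybar_special_solution])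
  have "0 < e / CARD('m)" using \<open>0 < e\<close> by simp
  then have "\<exists>\<delta>>0. \<forall>t' v. in_C \<tau> v \<and> \<bar>t' - t\<bar> < \<delta> \<and> supnorm \<tau> (\<lambda>s. v s - u s) < \<delta> \<longrightarrow>
      maxnorm (F t' v - F t u) < e / CARD('m)"
    using F_continuous \<open>in_C \<tau> u\<close> unfolding cont_RC_def by blast
  then obtain \<delta>1 where "0 < \<delta>1" and F_close: "\<And>t' v. in_C \<tau> v \<Longrightarrow> \<bar>t' - t\<bar> < \<delta>1 \<Longrightarrow>
      supnorm \<tau> (\<lambda>s. v s - u s) < \<delta>1 \<Longrightarrow> maxnorm (F t' v - F t u) < e / CARD('m)"
    by blast
  obtain \<delta>2 where "0 < \<delta>2" and seg_close: "\<And>t' z'. \<bar>t' - t\<bar> < \<delta>2 \<Longrightarrow> maxnorm (z' - z) < \<delta>2 \<Longrightarrow>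
      supnorm \<tau> (\<lambda>s. seg (ybar \<tau> F t' z') t' s - u s) < \<delta>1"
    using seg_ybar_continuous[OF \<open>0 < \<delta>1\<close>] unfolding u_def by blast
  show "\<exists>\<delta>>0. \<forall>p'\<in>UNIV. dist p' p < \<delta> \<longrightarrow>
      dist ((\<lambda>(t, z). Ftilde \<tau> F t z) p') ((\<lambda>(t, z). Ftilde \<tau> F t z) p) < e"
  proof (intro exI[of _ "min \<delta>1 \<delta>2"] conjI ballI impI)
    show "0 < min \<delta>1 \<delta>2" using \<open>0 < \<delta>1\<close> \<open>0 < \<delta>2\<close> by simp
    fix p' :: "real \<times> (real ^ 'm)" assume close: "dist p' p < min \<delta>1 \<delta>2"
    obtain t' z' where p': "p' = (t', z')" by fastforce
    have "dist t' t < min \<delta>1 \<delta>2" "dist z' z < min \<delta>1 \<delta>2"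
      using dist_fst_le[of p' p] dist_snd_le[of p' p] close by (simp_all add: p p')
    then have t': "\<bar>t' - t\<bar> < min \<delta>1 \<delta>2" and z': "maxnorm (z' - z) < min \<delta>1 \<delta>2"
      using maxnorm_le_norm[of "z' - z"] by (simp_all add: dist_real_def dist_norm)
    then have "supnorm \<tau> (\<lambda>s. seg (ybar \<tau> F t' z') t' s - u s) < \<delta>1"
      by (intro seg_close) simp_all
    then have "maxnorm (Ftilde \<tau> F t' z' - Ftilde \<tau> F t z) < e / CARD('m)"
      unfolding Ftilde_def u_def[symmetric]
      using F_close[OF special_solution_seg_in_C[OF ybar_special_solution]] t' by simp
    then have "CARD('m) * maxnorm (Ftilde \<tau> F t' z' - Ftilde \<tau> F t z) < e"
      by (simp add: pos_less_divide_eq mult.commute)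
    then show "dist ((\<lambda>(t, z). Ftilde \<tau> F t z) p') ((\<lambda>(t, z). Ftilde \<tau> F t z) p) < e"
      using norm_le_card_maxnorm[of "Ftilde \<tau> F t' z' - Ftilde \<tau> F t z"] by (simp add: p p' dist_norm)
  qed
qed

lemma ybar_has_derivative_Ftilde:
  "(ybar \<tau> F t0 y0 has_vector_derivative Ftilde \<tau> F t (ybar \<tau> F t0 y0 t)) (at t)"
  using ybar_special_solution[of t0 y0] ybar_eq_special_solution[OF ybar_special_solution, of t t0 y0]
  unfolding special_solution_def Ftilde_def by simp

lemma ivp_solution_eq_ybar:
  assumes "is_interval I" "t0 \<in> I" "t \<in> I" "z t0 = y0"
    and z_deriv: "\<And>t. t \<in> I \<Longrightarrow> (z has_vector_derivative Ftilde \<tau> F t (z t)) (at t within I)"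
  shows "z t = ybar \<tau> F t0 y0 t"
proof -
  have "(\<lambda>t. z t - ybar \<tau> F t0 y0 t) t = 0"
  proof (rule gronwall_zero_maxnorm[OF assms(1-3), where L = "\<bar>char_root\<bar>"])
    fix s assume "s \<in> I"
    show "((\<lambda>t. z t - ybar \<tau> F t0 y0 t) has_vector_derivative
        Ftilde \<tau> F s (z s) - Ftilde \<tau> F s (ybar \<tau> F t0 y0 s)) (at s within I)"
      using z_deriv[OF \<open>s \<in> I\<close>] has_vector_derivative_at_within[OF ybar_has_derivative_Ftilde]
      by (rule has_vector_derivative_diff)
  qed (use assms(4) ybar_initial Ftilde_lipschitz in auto)
  then show ?thesis by simp
qed

end

theorem mainTheorem6:
  fixes F :: "real \<Rightarrow> (real \<Rightarrow> real ^ 'm) \<Rightarrow> real ^ 'm"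
    and \<tau> A K :: real
  assumes tau_pos: "\<tau> > 0"
    and wnl: "weakly_nonlinear \<tau> F A K"
    and small: "K * \<tau> * exp 1 < 1"
    and driver: "\<forall>t0 y0. \<exists>!y. special_solution \<tau> F y \<and> y t0 = y0"
  shows "continuous_on UNIV (\<lambda>(t, z). Ftilde \<tau> F t z)
    \<and> (\<forall>t0 y0.
         (\<forall>t. (ybar \<tau> F t0 y0 has_vector_derivative Ftilde \<tau> F t (ybar \<tau> F t0 y0 t)) (at t))
         \<and> ybar \<tau> F t0 y0 t0 = y0
         \<and> (\<forall>I z. is_interval I \<and> t0 \<in> I \<and> z t0 = y0 \<and>
               (\<forall>t\<in>I. (z has_vector_derivative Ftilde \<tau> F t (z t)) (at t within I))
               \<longrightarrow> (\<forall>t\<in>I. z t = ybar \<tau> F t0 y0 t)))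
    \<and> (\<exists>!l. l \<in> {-1/\<tau><..<0} \<and> l = - K * exp (- l * \<tau>))
    \<and> (\<forall>l. l \<in> {-1/\<tau><..<0} \<and> l = - K * exp (- l * \<tau>) \<longrightarrow>
         \<bar>l\<bar> < K * exp 1 \<and>
         (\<forall>t z w. maxnorm (Ftilde \<tau> F t z - Ftilde \<tau> F t w) \<le> \<bar>l\<bar> * maxnorm (z - w)))"
proof -
  have dde: "weakly_nonlinear_dde \<tau> A K F"
    unfolding weakly_nonlinear_dde_def using assms by blast
  note K_pos = weakly_nonlinear_dde.K_pos[OF dde]
  have "\<exists>!l. l \<in> {-1/\<tau><..<0} \<and> l = - K * exp (- l * \<tau>)"
    by (rule characteristic_root_ex1[OF tau_pos K_pos small])
  moreover have "\<bar>l\<bar> < K * exp 1 \<and> (\<forall>t z w. maxnorm (Ftilde \<tau> F t z - Ftilde \<tau> F t w) \<le> \<bar>l\<bar> * maxnorm (z - w))"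
    if root: "l \<in> {-1/\<tau><..<0} \<and> l = - K * exp (- l * \<tau>)" for l
  proof
    show "\<bar>l\<bar> < K * exp 1"
      using root by (intro characteristic_root_abs_less[OF tau_pos K_pos]) auto
    show "\<forall>t z w. maxnorm (Ftilde \<tau> F t z - Ftilde \<tau> F t w) \<le> \<bar>l\<bar> * maxnorm (z - w)"
      using root weakly_nonlinear_dde.Ftilde_lipschitz[OF dde]
      unfolding weakly_nonlinear_dde.char_root_iff[OF dde] by simp
  qed
  moreover have "\<forall>t\<in>I. z t = ybar \<tau> F t0 y0 t"
    if "is_interval I \<and> t0 \<in> I \<and> z t0 = y0 \<and>
      (\<forall>t\<in>I. (z has_vector_derivative Ftilde \<tau> F t (z t)) (at t within I))" for I z t0 y0
    using that by (auto intro: weakly_nonlinear_dde.ivp_solution_eq_ybar[OF dde])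
  ultimately show ?thesis
    using weakly_nonlinear_dde.Ftilde_continuous[OF dde] weakly_nonlinear_dde.ybar_has_derivative_Ftilde[OF dde]
      weakly_nonlinear_dde.ybar_initial[OF dde] by simp
qed

end
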